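(* Let $\mathcal F \subset \binom{[n]}{k}$ be initial and let $q$ be a positive integer with $q < n$. Let $P \subset R \subset [q]$ with $|R| \leq k$. For $S \subset [q]$ write $\mathcal F_S = \{F \setminus S : F \in \mathcal F,\ F \cap [q] = S\}$ (a family of $(k-|S|)$-subsets of $[q+1,n]$). Then $$\frac{|\mathcal F_P|}{\binom{n-q}{k-|P|}} \leq \frac{|\mathcal F_R|}{\binom{n-q}{k-|R|}}.$$
   Context: For $k$-sets $A=\{x_1<\dots<x_k\}$, $B=\{y_1<\dots<y_k\}$, $A\prec B$ means $x_i\le y_i$ for all $i$. A family $\mathcal F\subset\binom{[n]}{k}$ is initial if $A\prec B\in\mathcal F$ implies $A\in\mathcal F$. $[q+1,n]=\{q+1,\dots,n\}$. *)

theory Defs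
  imports Complex_Main
begin

definition ksets :: "nat \<Rightarrow> nat \<Rightarrow> nat set set" where
  "ksets n k = {A. A \<subseteq> {1..n} \<and> card A = k}"

definition shift_prec :: "nat set \<Rightarrow> nat set \<Rightarrow> bool" where
  "shift_prec A B \<longleftrightarrow> finite A \<and> finite B \<and> card A = card B \<and>
     (\<forall>i < card A. sorted_list_of_set A ! i \<le> sorted_list_of_set B ! i)"

definition initial :: "nat \<Rightarrow> nat \<Rightarrow> nat set set \<Rightarrow> bool" where
  "initial n k F \<longleftrightarrow> F \<subseteq> ksets n k \<and>
     (\<forall>A \<in> ksets n k. \<forall>B \<in> F. shift_prec A B \<longrightarrow> A \<in> F)"

definition link :: "nat set set \<Rightarrow> nat \<Rightarrow> nat set \<Rightarrow> nat set set" where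
  "link F q S = {G - S | G. G \<in> F \<and> G \<inter> {1..q} = S}"

end

theory Submission
  imports Defs
begin

text \<open>Replacing one element of a set by a smaller element yields a set preceding it.
  Hence, if F is initial, x \<in> [q] - P and H \<in> F_P, then H - {y} \<in> F_(P \<union> {x}) for every y \<in> H,
  because (H - {y}) \<union> P \<union> {x} arises from H \<union> P by moving y > q down to x.
  Double counting the pairs X \<subset> H with H \<in> F_P (the local LYM inequality) then shows that
  the density |F_S| / binom (n-q) (k-|S|) does not decrease when one element of [q] is added
  to S; adding the elements of R - P one at a time gives the claim.\<close>

lemma card_less_sorted_nth:
  fixes A :: "'a::linorder set"
  assumes "finite A" and "i < card A"
  shows "card {a \<in> A. a < sorted_list_of_set A ! i} = i"
proof -
  define xs where "xs = sorted_list_of_set A"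
  have xs: "sorted_wrt (<) xs" "distinct xs" "set xs = A" "length xs = card A"
    using assms(1) by (simp_all add: xs_def)
  have "{a \<in> A. a < xs ! i} = set (take i xs)"
  proof (intro equalityI subsetI)
    fix a assume "a \<in> {a \<in> A. a < xs ! i}"
    then obtain j where j: "j < length xs" "a = xs ! j" "xs ! j < xs ! i"
      using xs(3) by (auto simp: in_set_conv_nth)
    have "j < i"
      using j assms(2) xs sorted_nth_mono[of xs i j] strict_sorted_imp_sorted
      by (metis leI leD)
    then show "a \<in> set (take i xs)" using j by (auto simp: in_set_conv_nth)
  next
    fix a assume "a \<in> set (take i xs)"
    then obtain j where "j < i" "a = xs ! j"
      by (auto simp: in_set_conv_nth)
    then show "a \<in> {a \<in> A. a < xs ! i}"
      using xs assms(2) by (auto simp: sorted_wrt_nth_less)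
  qed
  then show ?thesis
    using xs assms(2) by (simp add: xs_def distinct_card)
qed

lemma shift_prec_image:
  assumes "finite B" and "inj_on f B" and "\<And>b. b \<in> B \<Longrightarrow> f b \<le> b"
  shows "shift_prec (f ` B) B"
proof -
  have card_eq: "card (f ` B) = card B"
    using assms(2) by (rule card_image)
  have "sorted_list_of_set (f ` B) ! i \<le> sorted_list_of_set B ! i" if i: "i < card B" for i
  proof -
    define c where "c = sorted_list_of_set B ! i"
    define T where "T = insert c {b \<in> B. b < c}"
    have "c \<in> B"
      using \<open>finite B\<close> i unfolding c_def
      by (metis nth_mem set_sorted_list_of_set length_sorted_list_of_set)
    then have T_sub: "T \<subseteq> B"
      by (auto simp: T_def)
    have "\<not> c < sorted_list_of_set (f ` B) ! i"
    proof
      assume "c < sorted_list_of_set (f ` B) ! i"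
      then have below: "f b < sorted_list_of_set (f ` B) ! i" if "b \<in> T" for b
        using that T_sub assms(3) by (fastforce simp: T_def)
      have "Suc i = card T"
        using card_less_sorted_nth[OF \<open>finite B\<close> i] \<open>finite B\<close> by (simp add: T_def c_def)
      also have "\<dots> = card (f ` T)"
        using inj_on_subset[OF assms(2) T_sub] by (simp add: card_image)
      also have "\<dots> \<le> card {a \<in> f ` B. a < sorted_list_of_set (f ` B) ! i}"
        using T_sub below \<open>finite B\<close> by (intro card_mono) auto
      also have "\<dots> = i"
        using card_less_sorted_nth[of "f ` B" i] \<open>finite B\<close> i card_eq by simp
      finally show False by simp
    qed
    then show ?thesis
      by (simp add: c_def)
  qed
  then show ?thesis
    using assms(1) card_eq by (simp add: shift_prec_def)
qed

lemma local_LYM: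
  fixes U :: "'a set" and G D :: "'a set set"
  assumes "finite U" and "0 < j"
    and G: "\<And>H. H \<in> G \<Longrightarrow> H \<subseteq> U \<and> card H = j"
    and D: "\<And>X. X \<in> D \<Longrightarrow> X \<subseteq> U \<and> card X = j - 1"
    and shadow: "\<And>H y. H \<in> G \<Longrightarrow> y \<in> H \<Longrightarrow> H - {y} \<in> D"
  shows "card G * j \<le> card D * (card U - (j - 1))"
proof -
  have "finite G" "finite D"
    using G D \<open>finite U\<close> by (meson PowI finite_Pow_iff finite_subset subsetI)+
  have up: "card {H \<in> G. X \<subseteq> H} \<le> card U - (j - 1)" if "X \<in> D" for X
  proof -
    have "{H \<in> G. X \<subseteq> H} \<subseteq> (\<lambda>u. insert u X) ` (U - X)"
    proof
      fix H assume H: "H \<in> {H \<in> G. X \<subseteq> H}"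
      then have "finite H" "X \<subseteq> H"
        using G[of H] \<open>finite U\<close> by (auto intro: rev_finite_subset)
      then have "card (H - X) = 1"
        using G H D \<open>X \<in> D\<close> \<open>0 < j\<close> by (simp add: card_Diff_subset rev_finite_subset)
      then obtain u where "H - X = {u}"
        by (rule card_1_singletonE)
      then show "H \<in> (\<lambda>u. insert u X) ` (U - X)"
        using H G by blast
    qed
    then have "card {H \<in> G. X \<subseteq> H} \<le> card (U - X)"
      using \<open>finite U\<close> card_image_le[of "U - X" "\<lambda>u. insert u X"]
      by (meson card_mono finite_Diff finite_imageI order_trans)
    moreover have "card (U - X) = card U - (j - 1)"
      using D[OF \<open>X \<in> D\<close>] \<open>finite U\<close> by (simp add: card_Diff_subset rev_finite_subset)
    ultimately show ?thesis
      by simp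
  qed
  have down: "j \<le> card {X \<in> D. X \<subseteq> H}" if "H \<in> G" for H
  proof -
    have "j = card ((\<lambda>y. H - {y}) ` H)"
      using G[OF that] by (subst card_image) (auto simp: inj_on_def)
    also have "\<dots> \<le> card {X \<in> D. X \<subseteq> H}"
      using shadow[OF that] \<open>finite D\<close> by (intro card_mono) auto
    finally show ?thesis .
  qed
  have "card G * j \<le> (\<Sum>H\<in>G. card {X \<in> D. X \<subseteq> H})"
    using sum_mono[of G "\<lambda>_. j", OF down] by simp
  also have "\<dots> = (\<Sum>H\<in>G. \<Sum>X\<in>D. if X \<subseteq> H then 1 else 0)"
    using \<open>finite D\<close> by (simp add: sum.inter_filter[symmetric])
  also have "\<dots> = (\<Sum>X\<in>D. \<Sum>H\<in>G. if X \<subseteq> H then 1 else 0)"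
    by (rule sum.swap)
  also have "\<dots> = (\<Sum>X\<in>D. card {H \<in> G. X \<subseteq> H})"
    using \<open>finite G\<close> by (simp add: sum.inter_filter[symmetric])
  also have "\<dots> \<le> card D * (card U - (j - 1))"
    using sum_mono[of D _ "\<lambda>_. card U - (j - 1)", OF up] by simp
  finally show ?thesis .
qed

definition link_density :: "nat \<Rightarrow> nat \<Rightarrow> nat set set \<Rightarrow> nat \<Rightarrow> nat set \<Rightarrow> real" where
  "link_density n k F q S = real (card (link F q S)) / real ((n - q) choose (k - card S))"

lemma link_subset:
  assumes "F \<subseteq> ksets n k" and "S \<subseteq> {1..q}" and "H \<in> link F q S"
  shows "H \<subseteq> {Suc q..n} \<and> card H = k - card S"
proof -
  obtain G where G: "H = G - S" "G \<in> F" "G \<inter> {1..q} = S"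
    using assms(3) by (auto simp: link_def)
  then have "G \<subseteq> {1..n}" "card G = k" "S \<subseteq> G"
    using assms(1) by (auto simp: ksets_def)
  moreover have "finite S"
    using \<open>G \<subseteq> {1..n}\<close> \<open>S \<subseteq> G\<close> by (meson finite_atLeastAtMost rev_finite_subset)
  ultimately show ?thesis
    using G by (auto simp: card_Diff_subset)
qed

lemma Diff_singleton_in_link_insert:
  assumes "initial n k F" and "x \<in> {1..q}" "x \<notin> P" and "q < n"
    and "H \<in> link F q P" and "y \<in> H"
  shows "H - {y} \<in> link F q (insert x P)"
proof -
  obtain G where G: "H = G - P" "G \<in> F" "G \<inter> {1..q} = P"
    using assms(5) by (auto simp: link_def)
  have "G \<in> ksets n k"
    using G(2) assms(1) by (auto simp: initial_def)
  then have "finite G" "G \<subseteq> {1..n}" "card G = k"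
    by (auto simp: ksets_def intro: rev_finite_subset)
  have "y \<in> G" "q < y" "x \<notin> G"
    using G assms(2,3,6) \<open>G \<subseteq> {1..n}\<close> by auto
  define f where "f b = (if b = y then x else b)" for b
  define A where "A = f ` G"
  have "inj_on f G"
    using \<open>x \<notin> G\<close> by (auto simp: f_def inj_on_def)
  have "shift_prec A G"
    unfolding A_def using \<open>finite G\<close> \<open>inj_on f G\<close>
    by (rule shift_prec_image) (use assms(2) \<open>q < y\<close> in \<open>auto simp: f_def\<close>)
  moreover have "A \<in> ksets n k"
  proof -
    have "card A = k"
      using \<open>inj_on f G\<close> \<open>card G = k\<close> by (simp add: A_def card_image)
    moreover have "A \<subseteq> {1..n}"
      using \<open>G \<subseteq> {1..n}\<close> assms(2,4) by (auto simp: A_def f_def)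
    ultimately show ?thesis
      by (simp add: ksets_def)
  qed
  ultimately have "A \<in> F"
    using assms(1) G(2) unfolding initial_def by blast
  moreover have "A \<inter> {1..q} = insert x P"
    using G assms(2) \<open>q < y\<close> \<open>y \<in> G\<close> by (auto simp: A_def f_def)
  moreover have "A - insert x P = H - {y}"
    using G \<open>x \<notin> G\<close> by (auto simp: A_def f_def)
  ultimately show ?thesis
    unfolding link_def by blast
qed

lemma link_density_insert:
  assumes "initial n k F" and "P \<subseteq> {1..q}" and "x \<in> {1..q}" "x \<notin> P"
    and "q < n" and "card P < k"
  shows "link_density n k F q P \<le> link_density n k F q (insert x P)"
proof -
  define j m where "j = k - card P" and "m = n - q"
  have "finite P"
    using assms(2) finite_subset by blast
  have "0 < j"
    using assms(6) by (simp add: j_def)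
  have card_ins: "k - card (insert x P) = j - 1"
    using \<open>finite P\<close> assms(4) by (simp add: j_def)
  have "F \<subseteq> ksets n k"
    using assms(1) by (simp add: initial_def)
  have "card (link F q P) * j \<le> card (link F q (insert x P)) * (card {Suc q..n} - (j - 1))"
  proof (rule local_LYM)
    show "H \<subseteq> {Suc q..n} \<and> card H = j" if "H \<in> link F q P" for H
      using link_subset[OF \<open>F \<subseteq> ksets n k\<close> assms(2) that] by (simp add: j_def)
    show "X \<subseteq> {Suc q..n} \<and> card X = j - 1" if "X \<in> link F q (insert x P)" for X
      using link_subset[OF \<open>F \<subseteq> ksets n k\<close> _ that] assms(2,3) card_ins by simp
  qed (use \<open>0 < j\<close> Diff_singleton_in_link_insert[OF assms(1,3,4,5)] in auto)
  then have LYM: "card (link F q P) * j \<le> card (link F q (insert x P)) * (m - (j - 1))"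
    by (simp add: m_def)
  show ?thesis
  proof (cases "j \<le> m")
    case False
    then show ?thesis
      by (simp add: link_density_def binomial_eq_0 j_def m_def)
  next
    case True
    have pascal: "(m choose j) * j = (m choose (j - 1)) * (m - (j - 1))"
      using binomial_absorb_comp[of m "j - 1"] binomial_absorption[of "j - 1" m] \<open>0 < j\<close>
      by (simp add: ac_simps)
    have "card (link F q P) * (m choose (j - 1)) * j
        = card (link F q P) * j * (m choose (j - 1))"
      by (simp only: ac_simps)
    also have "\<dots> \<le> card (link F q (insert x P)) * (m - (j - 1)) * (m choose (j - 1))"
      using LYM by (rule mult_le_mono1)
    also have "\<dots> = card (link F q (insert x P)) * (m choose j) * j"
      unfolding mult.assoc pascal by (simp only: ac_simps)
    finally have "card (link F q P) * (m choose (j - 1)) * j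
        \<le> card (link F q (insert x P)) * (m choose j) * j" .
    then have "card (link F q P) * (m choose (j - 1)) \<le> card (link F q (insert x P)) * (m choose j)"
      using \<open>0 < j\<close> by simp
    then have "real (card (link F q P)) * real (m choose (j - 1))
        \<le> real (card (link F q (insert x P))) * real (m choose j)"
      by (metis of_nat_le_iff of_nat_mult)
    moreover have "0 < m choose j" "0 < m choose (j - 1)"
      using True by simp_all
    ultimately show ?thesis
      using card_ins by (simp add: link_density_def divide_simps j_def m_def)
  qed
qed

lemma link_density_mono:
  assumes "initial n k F" and "q < n" and "P \<subseteq> R" and "R \<subseteq> {1..q}" and "card R \<le> k"
  shows "link_density n k F q P \<le> link_density n k F q R"
proof -
  have grow: "link_density n k F q P \<le> link_density n k F q (P \<union> D)"
    if "finite D" "D \<inter> P = {}" "P \<union> D \<subseteq> {1..q}" "card (P \<union> D) \<le> k" for D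
    using that
  proof (induction D rule: finite_induct)
    case (insert x D)
    have "P \<union> D \<subseteq> {1..q}"
      using insert.prems(2) by auto
    then have "finite (P \<union> D)"
      by (rule rev_finite_subset[OF finite_atLeastAtMost])
    moreover have "x \<notin> P \<union> D"
      using insert.hyps(2) insert.prems(1) by auto
    ultimately have "card (P \<union> D) < k"
      using insert.prems(3) by simp
    then have "link_density n k F q (P \<union> D) \<le> link_density n k F q (insert x (P \<union> D))"
      using link_density_insert[OF assms(1) _ _ _ assms(2)] insert.prems(2) \<open>x \<notin> P \<union> D\<close>
      by simp
    moreover have "link_density n k F q P \<le> link_density n k F q (P \<union> D)"
      using insert.IH insert.prems \<open>card (P \<union> D) < k\<close> by simp
    ultimately show ?case
      by simp
  qed simp
  have "finite (R - P)"
    using assms(4) by (meson Diff_subset finite_atLeastAtMost rev_finite_subset)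
  moreover have "P \<union> (R - P) = R"
    using assms(3) by blast
  ultimately show ?thesis
    using grow[of "R - P"] assms(4,5) by auto
qed

theorem lemma2p5:
  fixes n k q :: nat and F :: "nat set set" and P R :: "nat set"
  assumes "initial n k F"
    and "0 < q" and "q < n"
    and "P \<subseteq> R" and "R \<subseteq> {1..q}" and "card R \<le> k"
  shows "real (card (link F q P)) / real ((n - q) choose (k - card P))
         \<le> real (card (link F q R)) / real ((n - q) choose (k - card R))"
  using link_density_mono[OF assms(1,3-6)] by (simp add: link_density_def)

end
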